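(* There exist absolute constants $C<\infty$ and $K_0$ such that the following holds. Let $N\ge0$ be an integer, $\theta\in[0,\pi)$ and $K\ge K_0$, and suppose $$\big|\{s\in\mathbb R:\ f^*_{N,\theta}(s)\ge K\}\big|\le K^{-3}.$$ Then $$\max_{0\le n\le N}\|f_{n,\theta}\|^2_{L^2(\mathbb R)}\le C\,K.$$
   Context: For $n\ge 0$ and $\alpha\in\{-1,0,1\}^n$ let $z_\alpha=\sum_{k=1}^n 3^{-k}e^{i\pi(\frac12+\frac23\alpha_k)}$ (so $z_\alpha=0$ when $n=0$), and let $\operatorname{proj}_\theta(w)=\operatorname{Re}(we^{-i\theta})$. The projection multiplicity function is $f_{n,\theta}(s)=\#\{\alpha\in\{-1,0,1\}^n:\ |\operatorname{proj}_\theta(z_\alpha)-s|<3^{-n}\}$, $s\in\mathbb R$, i.e. the number of the $3^n$ discs $B(z_\alpha,3^{-n})$ whose projection contains $s$. For $N\ge0$, $f^*_{N,\theta}(s)=\max_{0\le n\le N}f_{n,\theta}(s)$. $|\cdot|$ denotes Lebesgue measure. *)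

theory Defs
  imports "HOL-Analysis.Analysis"
begin

text \<open>Digit sequences alpha in {-1,0,1}^n, represented as lists of length n;
  entry k (1-based) is the list element at index k-1.\<close>
definition digits :: "nat \<Rightarrow> int list set" where
  "digits n = {a. length a = n \<and> set a \<subseteq> {-1, 0, 1}}"

definition zpt :: "int list \<Rightarrow> complex" where
  "zpt a = (\<Sum>k<length a. complex_of_real ((1/3) ^ (k+1)) *
      exp (\<i> * complex_of_real (pi * (1/2 + (2/3) * real_of_int (a ! k)))))"

definition proj :: "real \<Rightarrow> complex \<Rightarrow> real" where
  "proj \<theta> w = Re (w * exp (- \<i> * complex_of_real \<theta>))"

definition fmult :: "nat \<Rightarrow> real \<Rightarrow> real \<Rightarrow> nat" where
  "fmult n \<theta> s = card {a \<in> digits n. \<bar>proj \<theta> (zpt a) - s\<bar> < (1/3) ^ n}"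

definition fstar :: "nat \<Rightarrow> real \<Rightarrow> real \<Rightarrow> nat" where
  "fstar N \<theta> s = Max ((\<lambda>n. fmult n \<theta> s) ` {0..N})"

end

theory Submission
  imports Defs
begin

text \<open>
  Write \<open>E(n) = \<parallel>f\<^sub>n\<parallel>\<^sub>2\<^sup>2\<close> and let \<open>A\<close> be the exceptional set \<open>{f\<^sup>*\<^sub>N \<ge> K}\<close>.
  The bound \<open>E(N) \<le> 19 K\<close> is proved by strong induction on \<open>N\<close> (the hypothesis passes to
  smaller \<open>N\<close> because \<open>A\<close> grows with \<open>N\<close>).  Split \<open>E(N)\<close> into the contributions of the
  \<open>3\<^sup>N\<close> level-\<open>N\<close> intervals.  Call a word heavy if the interval of three times its radius
  around its projected centre lies in \<open>A\<close>.  Near a light word there is a point outside \<open>A\<close>;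
  by self-similarity, counting centres near it reduces to a multiplicity below \<open>K\<close>, so light
  words contribute at most \<open>18 K\<close>.  Each heavy word has a minimal heavy prefix \<open>b\<close> of some
  level \<open>j \<ge> 1\<close> (the root is not heavy since \<open>|A| \<le> K\<^sup>-\<^sup>3\<close>); the descendants of \<open>b\<close> form a
  copy of level \<open>N - j\<close> scaled by \<open>3\<^sup>-\<^sup>j\<close>, and cross terms with the \<open>O(K)\<close> neighbouring
  words give \<open>O(K\<^sup>2 3\<^sup>-\<^sup>j)\<close> by induction.  Finally the intervals of minimal heavy words cover
  \<open>A\<close> with overlap \<open>O(K)\<close>, so \<open>\<Sum> 3\<^sup>-\<^sup>j = O(K\<^sup>-\<^sup>2)\<close> and heavy words contribute \<open>O(1)\<close>.
\<close>

lemma abs_diff_lt_shift: "\<bar>x - y\<bar> \<le> d \<Longrightarrow> \<bar>x - u\<bar> < \<rho> \<Longrightarrow> \<bar>y - u\<bar> < \<rho> + (d::real)"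
  by linarith

lemma abs_diff_lt_hull:
  "\<bar>x - y\<bar> \<le> (r - q) / 2 \<Longrightarrow> \<bar>x - u\<bar> < q \<Longrightarrow> q \<le> r \<Longrightarrow> \<bar>y - u\<bar> < (r::real)"
  by (auto simp: abs_if split: if_splits)

lemma pow3_sub:
  assumes "k \<le> m" shows "(1/3::real) ^ (m - k) = 3 ^ k * (1/3) ^ m"
proof -
  have "(1/3::real) ^ m = (1/3) ^ k * (1/3) ^ (m - k)"
    using assms by (simp add: power_add[symmetric])
  then show ?thesis by (simp add: power_one_over)
qed

lemma mult_le_mean_squares:
  "(of_nat a :: ennreal) * of_nat b \<le> ennreal (1/2) * ((of_nat a)\<^sup>2 + (of_nat b)\<^sup>2)"
proof -
  have sq: "(of_nat n :: ennreal)\<^sup>2 = ennreal ((real n)\<^sup>2)" for n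
    by (simp add: ennreal_of_nat_eq_real_of_nat ennreal_power)
  have "real a * real b \<le> 1/2 * ((real a)\<^sup>2 + (real b)\<^sup>2)"
    using sum_squares_ge_zero[of "real a - real b" 0] by (simp add: power2_eq_square algebra_simps)
  then have "ennreal (real a * real b) \<le> ennreal (1/2 * ((real a)\<^sup>2 + (real b)\<^sup>2))"
    by (rule ennreal_leI)
  also have "\<dots> = ennreal (1/2) * ennreal ((real a)\<^sup>2 + (real b)\<^sup>2)"
    by (rule ennreal_mult) auto
  also have "ennreal ((real a)\<^sup>2 + (real b)\<^sup>2) = (of_nat a)\<^sup>2 + (of_nat b)\<^sup>2"
    unfolding sq by (rule ennreal_plus) auto
  finally show ?thesis
    by (simp add: ennreal_of_nat_eq_real_of_nat ennreal_mult)
qed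

lemma ennreal_half_double: "ennreal (1/2) * (x + x) = x"
proof -
  have "ennreal (1/2) * (x + x) = (ennreal (1/2) * ennreal 2) * x"
    by (simp add: mult_2[symmetric] mult.assoc)
  also have "ennreal (1/2) * ennreal 2 = 1"
    by (subst ennreal_mult[symmetric]) auto
  finally show ?thesis by simp
qed

lemma ball_real_sets [measurable]: "ball (c::real) r \<in> sets borel"
  by simp

lemma emeasure_ball_real: "r \<ge> 0 \<Longrightarrow> emeasure lborel (ball (c::real) r) = ennreal (2 * r)"
proof -
  assume "r \<ge> 0"
  have "ball c r = {c - r<..<c + r}" by (auto simp: dist_real_def)
  then show ?thesis using \<open>r \<ge> 0\<close> by (simp add: emeasure_lborel_Ioo)
qed

section \<open>Self-similarity of the projected centres\<close>

definition digit_dir :: "int \<Rightarrow> complex" where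
  "digit_dir x = exp (\<i> * complex_of_real (pi * (1/2 + (2/3) * real_of_int x)))"

lemma norm_digit_dir [simp]: "norm (digit_dir x) = 1"
  unfolding digit_dir_def by (rule norm_exp_i_times)

lemma zpt_Nil [simp]: "zpt [] = 0"
  by (simp add: zpt_def)

lemma zpt_Cons: "zpt (x # b) = (1/3) * (digit_dir x + zpt b)"
proof -
  have "zpt (x # b) = (\<Sum>k<Suc (length b). complex_of_real ((1/3) ^ (k+1)) * digit_dir ((x#b) ! k))"
    by (simp add: zpt_def digit_dir_def)
  also have "\<dots> = complex_of_real (1/3) * digit_dir x
      + (\<Sum>k<length b. complex_of_real ((1/3) ^ (k+2)) * digit_dir (b ! k))"
    by (subst sum.lessThan_Suc_shift) simp
  also have "(\<Sum>k<length b. complex_of_real ((1/3) ^ (k+2)) * digit_dir (b ! k)) = (1/3) * zpt b"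
    by (simp add: zpt_def digit_dir_def sum_distrib_left mult.assoc)
  finally show ?thesis by (simp add: algebra_simps)
qed

lemma zpt_append: "zpt (a @ b) = zpt a + complex_of_real ((1/3) ^ length a) * zpt b"
  by (induction a) (simp_all add: zpt_Cons algebra_simps)

lemma norm_zpt: "norm (zpt b) \<le> (1 - (1/3) ^ length b) / 2"
proof (induction b)
  case (Cons x b)
  have "norm (zpt (x # b)) \<le> (1/3) * (norm (digit_dir x) + norm (zpt b))"
    using norm_triangle_ineq[of "digit_dir x" "zpt b"] by (simp add: zpt_Cons norm_mult)
  also have "\<dots> \<le> (1/3) * (1 + (1 - (1/3) ^ length b) / 2)"
    using Cons by simp
  also have "\<dots> = (1 - (1/3) ^ length (x # b)) / 2"
    by simp
  finally show ?case .
qed simp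

definition pcentre :: "real \<Rightarrow> int list \<Rightarrow> real" where
  "pcentre \<theta> a = proj \<theta> (zpt a)"

lemma proj_add: "proj \<theta> (w + v) = proj \<theta> w + proj \<theta> v"
  by (simp add: proj_def algebra_simps)

lemma proj_scale: "proj \<theta> (complex_of_real c * w) = c * proj \<theta> w"
  by (simp add: proj_def mult.assoc)

lemma abs_proj_le: "\<bar>proj \<theta> w\<bar> \<le> norm w"
proof -
  have "norm (exp (- \<i> * complex_of_real \<theta>)) = 1"
    using norm_exp_i_times[of "-\<theta>"] by simp
  then show ?thesis
    unfolding proj_def using abs_Re_le_cmod[of "w * exp (- \<i> * complex_of_real \<theta>)"]
    by (simp add: norm_mult)
qed

lemma pcentre_Nil [simp]: "pcentre \<theta> [] = 0"
  by (simp add: pcentre_def proj_def)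

lemma pcentre_append: "pcentre \<theta> (a @ b) = pcentre \<theta> a + (1/3) ^ length a * pcentre \<theta> b"
  unfolding pcentre_def zpt_append proj_add proj_scale by simp

lemma pcentre_descendant:
  "\<bar>pcentre \<theta> (a @ b) - pcentre \<theta> a\<bar> \<le> ((1/3) ^ length a - (1/3) ^ (length a + length b)) / 2"
proof -
  have "\<bar>pcentre \<theta> b\<bar> \<le> (1 - (1/3) ^ length b) / 2"
    using abs_proj_le[of \<theta> "zpt b"] norm_zpt[of b] unfolding pcentre_def by linarith
  then have "(1/3) ^ length a * \<bar>pcentre \<theta> b\<bar> \<le> (1/3) ^ length a * ((1 - (1/3) ^ length b) / 2)"
    by (rule mult_left_mono) simp
  then show ?thesis
    by (simp add: pcentre_append abs_mult power_add algebra_simps)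
qed

lemma digits_length: "a \<in> digits n \<Longrightarrow> length a = n"
  by (simp add: digits_def)

lemma finite_digits [simp]: "finite (digits n)"
proof -
  have "digits n = {xs. set xs \<subseteq> {-1,0,1} \<and> length xs = n}"
    by (auto simp: digits_def)
  then show ?thesis by (simp add: finite_lists_length_eq)
qed

lemma card_digits: "card (digits n) = 3 ^ n"
proof -
  have "digits n = {xs. set xs \<subseteq> {-1,0,1} \<and> length xs = n}"
    by (auto simp: digits_def)
  then show ?thesis by (simp add: card_lists_length_eq numeral_3_eq_3)
qed

lemma digits_append: "a \<in> digits m \<Longrightarrow> b \<in> digits k \<Longrightarrow> a @ b \<in> digits (m + k)"
  by (auto simp: digits_def)

lemma digits_take: "a \<in> digits n \<Longrightarrow> j \<le> n \<Longrightarrow> take j a \<in> digits j"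
  by (auto simp: digits_def dest: in_set_takeD)

lemma digits_drop: "a \<in> digits n \<Longrightarrow> drop j a \<in> digits (n - j)"
  by (auto simp: digits_def dest: in_set_dropD)

lemma digits_split:
  assumes "j \<le> n"
  shows "digits n = (\<lambda>(b, c). b @ c) ` (digits j \<times> digits (n - j))"
proof (intro equalityI subsetI)
  fix a assume a: "a \<in> digits n"
  have "(take j a, drop j a) \<in> digits j \<times> digits (n - j)"
    using a assms by (simp add: digits_take digits_drop)
  then show "a \<in> (\<lambda>(b, c). b @ c) ` (digits j \<times> digits (n - j))"
    by (rule rev_image_eqI) simp
qed (use assms in \<open>auto dest: digits_append\<close>)

lemma sum_digits_split:
  assumes "j \<le> n"
  shows "(\<Sum>a\<in>digits n. h a) = (\<Sum>b\<in>digits j. \<Sum>c\<in>digits (n - j). h (b @ c))"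
proof -
  have "inj_on (\<lambda>(b, c). b @ c) (digits j \<times> digits (n - j))"
    by (auto simp: inj_on_def digits_def)
  then have "(\<Sum>a\<in>digits n. h a) = (\<Sum>x\<in>digits j \<times> digits (n - j). h ((\<lambda>(b, c). b @ c) x))"
    by (subst digits_split[OF assms]) (rule sum.reindex[unfolded comp_def])
  then show ?thesis by (simp add: sum.cartesian_product case_prod_beta)
qed

lemma card_near_coarsen:
  assumes "k \<le> m"
  shows "card {b\<in>digits m. \<bar>pcentre \<theta> b - u\<bar> < \<rho>}
    \<le> 3 ^ k * card {c\<in>digits (m - k).
          \<bar>pcentre \<theta> c - u\<bar> < \<rho> + ((1/3) ^ (m - k) - (1/3) ^ m) / 2}"
proof -
  let ?S = "{c\<in>digits (m - k). \<bar>pcentre \<theta> c - u\<bar> < \<rho> + ((1/3) ^ (m - k) - (1/3) ^ m) / 2}"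
  have "{b\<in>digits m. \<bar>pcentre \<theta> b - u\<bar> < \<rho>} \<subseteq> (\<lambda>(b, c). b @ c) ` (?S \<times> digits k)"
  proof
    fix b assume "b \<in> {b\<in>digits m. \<bar>pcentre \<theta> b - u\<bar> < \<rho>}"
    then have b: "b \<in> digits m" "\<bar>pcentre \<theta> b - u\<bar> < \<rho>" by auto
    have "\<bar>pcentre \<theta> b - pcentre \<theta> (take (m-k) b)\<bar> \<le> ((1/3) ^ (m - k) - (1/3) ^ m) / 2"
      using pcentre_descendant[of \<theta> "take (m-k) b" "drop (m-k) b"] digits_length[OF b(1)] assms
      by simp
    then have "\<bar>pcentre \<theta> (take (m-k) b) - u\<bar> < \<rho> + ((1/3) ^ (m - k) - (1/3) ^ m) / 2"
      using b(2) by (rule abs_diff_lt_shift)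
    then have "take (m-k) b \<in> ?S"
      using digits_take[OF b(1), of "m-k"] by simp
    moreover have "drop (m-k) b \<in> digits k"
      using digits_drop[OF b(1), of "m-k"] assms by simp
    ultimately show "b \<in> (\<lambda>(b, c). b @ c) ` (?S \<times> digits k)"
      by (intro rev_image_eqI[of "(take (m-k) b, drop (m-k) b)"]) auto
  qed
  then have "card {b\<in>digits m. \<bar>pcentre \<theta> b - u\<bar> < \<rho>} \<le> card ((\<lambda>(b, c). b @ c) ` (?S \<times> digits k))"
    by (rule card_mono[rotated]) simp
  also have "\<dots> \<le> card (?S \<times> digits k)"
    by (rule card_image_le) simp
  finally show ?thesis
    by (simp add: card_cartesian_product card_digits mult.commute)
qed

text \<open>Counting centres within given radii is a sum of indicators of balls; this gives
  measurability and lets integrals be split over the centres.\<close>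
lemma card_near_sum_indicator:
  fixes g r :: "'a \<Rightarrow> real"
  assumes "finite S"
  shows "(of_nat (card {a\<in>S. \<bar>g a - s\<bar> < r a}) :: 'b::comm_semiring_1)
    = (\<Sum>a\<in>S. indicator (ball (g a) (r a)) s)"
  unfolding card_eq_sum sum.inter_filter[OF assms] of_nat_sum
  by (intro sum.cong) (auto simp: indicator_def dist_real_def)

lemma fmult_eq: "fmult n \<theta> s = card {a\<in>digits n. \<bar>pcentre \<theta> a - s\<bar> < (1/3) ^ n}"
  by (simp add: fmult_def pcentre_def)

lemma fmult_sum_indicator:
  "(of_nat (fmult n \<theta> s) :: 'b::comm_semiring_1)
    = (\<Sum>a\<in>digits n. indicator (ball (pcentre \<theta> a) ((1/3) ^ n)) s)"
  unfolding fmult_eq by (rule card_near_sum_indicator) simp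

lemma fmult_measurable_ennreal [measurable]:
  "(\<lambda>s. of_nat (fmult n \<theta> s) :: ennreal) \<in> borel_measurable borel"
  unfolding fmult_sum_indicator by (rule borel_measurable_sum) (rule borel_measurable_indicator, simp)

lemma fmult_measurable_real [measurable]:
  "(\<lambda>s. real (fmult n \<theta> s)) \<in> borel_measurable borel"
  unfolding fmult_sum_indicator by (rule borel_measurable_sum) (rule borel_measurable_indicator, simp)

lemma card_near_le_fmult:
  assumes km: "k \<le> m" and r: "r + (3 ^ k - 1) / 2 \<le> 3 ^ k"
  shows "card {b\<in>digits m. \<bar>pcentre \<theta> b - u\<bar> < r * (1/3) ^ m} \<le> 3 ^ k * fmult (m - k) \<theta> u"
proof -
  have "r * (1/3) ^ m + ((1/3) ^ (m - k) - (1/3) ^ m) / 2 = (r + (3 ^ k - 1) / 2) * (1/3::real) ^ m"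
    by (simp add: pow3_sub[OF km] algebra_simps)
  also have "\<dots> \<le> (1/3) ^ (m - k)"
    using mult_right_mono[OF r, of "(1/3) ^ m"] by (simp add: pow3_sub[OF km])
  finally have "card {c\<in>digits (m - k). \<bar>pcentre \<theta> c - u\<bar> < r * (1/3) ^ m + ((1/3) ^ (m - k) - (1/3) ^ m) / 2}
      \<le> fmult (m - k) \<theta> u"
    unfolding fmult_eq by (intro card_mono) auto
  with card_near_coarsen[OF km, of \<theta> u "r * (1/3) ^ m"] show ?thesis
    by (meson le_trans mult_le_mono2)
qed

section \<open>Sub-counts and rescaling of the energy\<close>

definition energy :: "real \<Rightarrow> nat \<Rightarrow> ennreal" where
  "energy \<theta> n = (\<integral>\<^sup>+ s. (of_nat (fmult n \<theta> s))\<^sup>2 \<partial>lborel)"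

definition subcount :: "real \<Rightarrow> int list \<Rightarrow> nat \<Rightarrow> real \<Rightarrow> nat" where
  "subcount \<theta> b k s = card {c\<in>digits k. \<bar>pcentre \<theta> (b @ c) - s\<bar> < (1/3) ^ (length b + k)}"

lemma subcount_sum_indicator:
  "(of_nat (subcount \<theta> b k s) :: 'b::comm_semiring_1)
    = (\<Sum>c\<in>digits k. indicator (ball (pcentre \<theta> (b @ c)) ((1/3) ^ (length b + k))) s)"
  unfolding subcount_def by (rule card_near_sum_indicator) simp

lemma subcount_measurable [measurable]:
  "(\<lambda>s. of_nat (subcount \<theta> b k s) :: ennreal) \<in> borel_measurable borel"
  unfolding subcount_sum_indicator
  by (rule borel_measurable_sum) (rule borel_measurable_indicator, simp)

lemma subcount_rescale:
  "subcount \<theta> b k s = fmult k \<theta> (3 ^ length b * (s - pcentre \<theta> b))"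
proof -
  have "\<bar>pcentre \<theta> (b @ c) - s\<bar> < (1/3) ^ (length b + k)
    \<longleftrightarrow> \<bar>pcentre \<theta> c - 3 ^ length b * (s - pcentre \<theta> b)\<bar> < (1/3) ^ k" for c
  proof -
    have "pcentre \<theta> (b @ c) - s = (1/3) ^ length b * (pcentre \<theta> c - 3 ^ length b * (s - pcentre \<theta> b))"
      by (simp add: pcentre_append algebra_simps power_one_over)
    then have "\<bar>pcentre \<theta> (b @ c) - s\<bar> = (1/3) ^ length b * \<bar>pcentre \<theta> c - 3 ^ length b * (s - pcentre \<theta> b)\<bar>"
      by (simp add: abs_mult)
    then show ?thesis by (simp add: power_add mult_less_cancel_left_pos)
  qed
  then show ?thesis
    unfolding subcount_def fmult_eq by simp
qed

text \<open>By the affine change of variables \<open>s \<mapsto> 3\<^sup>|\<^sup>b\<^sup>| (s - centre)\<close>, the energy of the descendants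
  of \<open>b\<close> is \<open>3\<^sup>-\<^sup>|\<^sup>b\<^sup>|\<close> times the energy of level \<open>k\<close>.\<close>
lemma energy_subcount:
  "(\<integral>\<^sup>+ s. (of_nat (subcount \<theta> b k s))\<^sup>2 \<partial>lborel) = ennreal ((1/3) ^ length b) * energy \<theta> k"
proof -
  let ?f = "\<lambda>t. (of_nat (fmult k \<theta> t) :: ennreal)\<^sup>2"
  let ?c = "3 ^ length b :: real"
  have "?f \<in> borel_measurable borel"
    by measurable
  then have "energy \<theta> k = ennreal ?c * (\<integral>\<^sup>+ s. ?f (- (?c * pcentre \<theta> b) + ?c * s) \<partial>lborel)"
    unfolding energy_def using nn_integral_real_affine[of ?f ?c "- (?c * pcentre \<theta> b)"] by simp
  also have "(\<lambda>s. ?f (- (?c * pcentre \<theta> b) + ?c * s)) = (\<lambda>s. (of_nat (subcount \<theta> b k s))\<^sup>2)"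
    by (simp add: subcount_rescale algebra_simps)
  finally have "ennreal ((1/3) ^ length b) * energy \<theta> k
      = (ennreal ((1/3) ^ length b) * ennreal ?c) * (\<integral>\<^sup>+ s. (of_nat (subcount \<theta> b k s))\<^sup>2 \<partial>lborel)"
    by (simp add: mult.assoc)
  also have "ennreal ((1/3) ^ length b) * ennreal ?c = 1"
    by (simp add: ennreal_mult''[symmetric] power_one_over)
  finally show ?thesis by simp
qed

lemma fmult_split:
  assumes "j \<le> N"
  shows "(of_nat (fmult N \<theta> s) :: ennreal) = (\<Sum>b\<in>digits j. of_nat (subcount \<theta> b (N - j) s))"
proof -
  have "length b + (N - j) = N" if "b \<in> digits j" for b
    using that assms digits_length by fastforce
  then show ?thesis
    unfolding fmult_sum_indicator subcount_sum_indicator sum_digits_split[OF assms]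
    by (intro sum.cong) simp_all
qed

lemma subcount_support:
  assumes "subcount \<theta> b k s \<noteq> 0"
  shows "\<bar>pcentre \<theta> b - s\<bar> < (1/3) ^ length b"
proof -
  obtain c where c: "c \<in> digits k" "\<bar>pcentre \<theta> (b @ c) - s\<bar> < (1/3) ^ (length b + k)"
    using assms unfolding subcount_def by (metis (no_types, lifting) card.empty empty_Collect_eq)
  have "\<bar>pcentre \<theta> (b @ c) - pcentre \<theta> b\<bar> \<le> ((1/3) ^ length b - (1/3) ^ (length b + k)) / 2"
    using pcentre_descendant[of \<theta> b c] digits_length[OF c(1)] by simp
  moreover have "(1/3::real) ^ (length b + k) \<le> (1/3) ^ length b"
    by (simp add: power_decreasing)
  ultimately show ?thesis
    using c(2) abs_diff_lt_hull by blast
qed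

definition local_energy :: "real \<Rightarrow> int list \<Rightarrow> ennreal" where
  "local_energy \<theta> a = (\<integral>\<^sup>+ s. indicator (ball (pcentre \<theta> a) ((1/3) ^ length a)) s
      * of_nat (fmult (length a) \<theta> s) \<partial>lborel)"

text \<open>Since \<open>f\<^sub>N\<close> is the sum of the indicators of the level-\<open>N\<close> intervals, its energy is the
  sum of their local energies.\<close>
lemma energy_decomp: "energy \<theta> N = (\<Sum>a\<in>digits N. local_energy \<theta> a)"
proof -
  have "energy \<theta> N = (\<integral>\<^sup>+ s. (\<Sum>a\<in>digits N. indicator (ball (pcentre \<theta> a) ((1/3)^N)) s
      * of_nat (fmult N \<theta> s)) \<partial>lborel)"
    unfolding energy_def power2_eq_square
    by (rule nn_integral_cong) (simp add: sum_distrib_right[symmetric] fmult_sum_indicator)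
  also have "\<dots> = (\<Sum>a\<in>digits N. \<integral>\<^sup>+ s. indicator (ball (pcentre \<theta> a) ((1/3)^N)) s
      * of_nat (fmult N \<theta> s) \<partial>lborel)"
    by (rule nn_integral_sum) simp
  also have "\<dots> = (\<Sum>a\<in>digits N. local_energy \<theta> a)"
    by (intro sum.cong) (simp_all add: local_energy_def digits_length)
  finally show ?thesis .
qed

lemma subcount_cross_term:
  assumes "length b' = length b"
  shows "(\<integral>\<^sup>+ s. of_nat (subcount \<theta> b k s) * of_nat (subcount \<theta> b' k s) \<partial>lborel)
    \<le> (if \<bar>pcentre \<theta> b' - pcentre \<theta> b\<bar> < 2 * (1/3) ^ length b
        then ennreal ((1/3) ^ length b) * energy \<theta> k else 0)"
proof (cases "\<bar>pcentre \<theta> b' - pcentre \<theta> b\<bar> < 2 * (1/3) ^ length b")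
  case True
  have "(\<integral>\<^sup>+ s. of_nat (subcount \<theta> b k s) * of_nat (subcount \<theta> b' k s) \<partial>lborel)
      \<le> (\<integral>\<^sup>+ s. ennreal (1/2) * ((of_nat (subcount \<theta> b k s))\<^sup>2 + (of_nat (subcount \<theta> b' k s))\<^sup>2) \<partial>lborel)"
    by (intro nn_integral_mono mult_le_mean_squares)
  also have "\<dots> = ennreal (1/2) * (ennreal ((1/3) ^ length b) * energy \<theta> k
      + ennreal ((1/3) ^ length b) * energy \<theta> k)"
    using assms by (simp add: nn_integral_cmult nn_integral_add energy_subcount)
  also have "\<dots> = ennreal ((1/3) ^ length b) * energy \<theta> k"
    by (rule ennreal_half_double)
  finally show ?thesis
    using True by simp
next
  case False
  have "subcount \<theta> b k s = 0 \<or> subcount \<theta> b' k s = 0" for s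
    using subcount_support[of \<theta> b k s] subcount_support[of \<theta> b' k s] False assms by fastforce
  then have "(\<lambda>s. of_nat (subcount \<theta> b k s) * of_nat (subcount \<theta> b' k s) :: ennreal) = (\<lambda>s. 0)"
    by (intro ext) (metis mult_zero_left mult_zero_right of_nat_0)
  then show ?thesis
    using False by simp
qed

lemma descendants_local_energy:
  assumes b: "b \<in> digits j" and jN: "j \<le> N"
  shows "(\<Sum>c\<in>digits (N - j). local_energy \<theta> (b @ c))
    \<le> of_nat (card {b'\<in>digits j. \<bar>pcentre \<theta> b' - pcentre \<theta> b\<bar> < 2 * (1/3) ^ j})
        * (ennreal ((1/3) ^ j) * energy \<theta> (N - j))"
proof -
  let ?G = "\<lambda>b s. of_nat (subcount \<theta> b (N - j) s) :: ennreal"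
  have len: "length b = j" "j + (N - j) = N"
    using digits_length[OF b] jN by auto
  have "(\<Sum>c\<in>digits (N - j). local_energy \<theta> (b @ c))
      = (\<Sum>c\<in>digits (N - j). \<integral>\<^sup>+ s. indicator (ball (pcentre \<theta> (b @ c)) ((1/3) ^ N)) s
          * of_nat (fmult N \<theta> s) \<partial>lborel)"
    using len by (intro sum.cong) (simp_all add: local_energy_def digits_length)
  also have "\<dots> = (\<integral>\<^sup>+ s. ?G b s * of_nat (fmult N \<theta> s) \<partial>lborel)"
    unfolding subcount_sum_indicator len sum_distrib_right by (rule nn_integral_sum[symmetric]) simp
  also have "\<dots> = (\<Sum>b'\<in>digits j. \<integral>\<^sup>+ s. ?G b s * ?G b' s \<partial>lborel)"
    unfolding fmult_split[OF jN] sum_distrib_left by (rule nn_integral_sum) simp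
  also have "\<dots> \<le> (\<Sum>b'\<in>digits j. if \<bar>pcentre \<theta> b' - pcentre \<theta> b\<bar> < 2 * (1/3) ^ j
      then ennreal ((1/3) ^ j) * energy \<theta> (N - j) else 0)"
  proof (rule sum_mono)
    fix b' assume "b' \<in> digits j"
    then have "length b' = length b"
      using len(1) digits_length by simp
    from subcount_cross_term[OF this, of \<theta> "N - j", unfolded len(1)]
    show "(\<integral>\<^sup>+ s. ?G b s * ?G b' s \<partial>lborel) \<le> (if \<bar>pcentre \<theta> b' - pcentre \<theta> b\<bar> < 2 * (1/3) ^ j
      then ennreal ((1/3) ^ j) * energy \<theta> (N - j) else 0)" .
  qed
  also have "\<dots> = of_nat (card {b'\<in>digits j. \<bar>pcentre \<theta> b' - pcentre \<theta> b\<bar> < 2 * (1/3) ^ j})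
      * (ennreal ((1/3) ^ j) * energy \<theta> (N - j))"
    by (simp add: sum.inter_filter[symmetric])
  finally show ?thesis .
qed

section \<open>The exceptional set\<close>

definition exceptional :: "real \<Rightarrow> nat \<Rightarrow> real \<Rightarrow> real set" where
  "exceptional \<theta> N K = {s. K \<le> real (fstar N \<theta> s)}"

lemma fmult_le_fstar: "j \<le> N \<Longrightarrow> fmult j \<theta> s \<le> fstar N \<theta> s"
  unfolding fstar_def by (rule Max_ge) auto

lemma exceptional_eq: "exceptional \<theta> N K = (\<Union>j\<in>{0..N}. {s. K \<le> real (fmult j \<theta> s)})"
proof (intro equalityI subsetI)
  fix s assume "s \<in> exceptional \<theta> N K"
  moreover have "fstar N \<theta> s \<in> (\<lambda>n. fmult n \<theta> s) ` {0..N}"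
    unfolding fstar_def by (rule Max_in) auto
  ultimately show "s \<in> (\<Union>j\<in>{0..N}. {s. K \<le> real (fmult j \<theta> s)})"
    unfolding exceptional_def by auto
next
  fix s assume "s \<in> (\<Union>j\<in>{0..N}. {s. K \<le> real (fmult j \<theta> s)})"
  then obtain j where "j \<le> N" "K \<le> real (fmult j \<theta> s)"
    by auto
  then show "s \<in> exceptional \<theta> N K"
    unfolding exceptional_def using fmult_le_fstar[of j N \<theta> s] by (simp add: order_trans)
qed

lemma exceptional_measurable [measurable]: "exceptional \<theta> N K \<in> sets borel"
  unfolding exceptional_eq by measurable

lemma not_exceptional: "s \<notin> exceptional \<theta> N K \<Longrightarrow> j \<le> N \<Longrightarrow> real (fmult j \<theta> s) < K"
  unfolding exceptional_eq by (auto simp: not_le)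

lemma exceptional_mono: "N' \<le> N \<Longrightarrow> exceptional \<theta> N' K \<subseteq> exceptional \<theta> N K"
  unfolding exceptional_eq by (intro UN_mono) auto

lemma card_near_unexceptional:
  assumes u: "u \<notin> exceptional \<theta> N K" and m: "m \<le> N" and K: "K \<ge> 1"
    and r: "r + (3 ^ k - 1) / 2 \<le> 3 ^ k"
  shows "real (card {b\<in>digits m. \<bar>pcentre \<theta> b - u\<bar> < r * (1/3) ^ m}) \<le> 3 ^ k * K"
proof (cases "k \<le> m")
  case True
  have "real (card {b\<in>digits m. \<bar>pcentre \<theta> b - u\<bar> < r * (1/3) ^ m}) \<le> real (3 ^ k * fmult (m - k) \<theta> u)"
    using card_near_le_fmult[OF True r] by (rule of_nat_mono)
  also have "\<dots> = 3 ^ k * real (fmult (m - k) \<theta> u)"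
    by simp
  also have "\<dots> \<le> 3 ^ k * K"
    using not_exceptional[OF u, of "m - k"] m by (simp add: less_imp_le)
  finally show ?thesis .
next
  case False
  have "card {b\<in>digits m. \<bar>pcentre \<theta> b - u\<bar> < r * (1/3) ^ m} \<le> card (digits m)"
    by (rule card_mono) auto
  also have "\<dots> = 3 ^ m"
    by (rule card_digits)
  also have "(3::nat) ^ m \<le> 3 ^ k"
    using False by (simp add: power_increasing)
  finally have "real (card {b\<in>digits m. \<bar>pcentre \<theta> b - u\<bar> < r * (1/3) ^ m}) \<le> real ((3::nat) ^ k)"
    by (rule of_nat_mono)
  also have "\<dots> \<le> 3 ^ k * K"
    using K by simp
  finally show ?thesis .
qed

section \<open>Heavy and light words\<close>

definition heavy :: "real \<Rightarrow> nat \<Rightarrow> real \<Rightarrow> int list \<Rightarrow> bool" where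
  "heavy \<theta> N K b \<longleftrightarrow> ball (pcentre \<theta> b) (3 * (1/3) ^ length b) \<subseteq> exceptional \<theta> N K"

text \<open>Minimal heavy words of length \<open>j\<close>: heavy, with a parent that is not heavy.\<close>
definition stopping :: "real \<Rightarrow> nat \<Rightarrow> real \<Rightarrow> nat \<Rightarrow> int list set" where
  "stopping \<theta> N K j = {b\<in>digits j. heavy \<theta> N K b \<and> \<not> heavy \<theta> N K (take (j - 1) b)}"

lemma finite_stopping [simp]: "finite (stopping \<theta> N K j)"
  unfolding stopping_def by simp

lemma stopping_ball_exceptional:
  assumes "b \<in> stopping \<theta> N K j" "\<bar>pcentre \<theta> b - t\<bar> < 3 * (1/3) ^ j"
  shows "t \<in> exceptional \<theta> N K"
  using assms digits_length by (force simp: stopping_def heavy_def dist_real_def)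

text \<open>Near the centre of a word that is not heavy there is a non-exceptional point, so the
  multiplicity on its interval is at most \<open>9 K\<close>.\<close>
lemma light_fmult_bound:
  assumes a: "a \<in> digits N" and light: "\<not> heavy \<theta> N K a" and K: "K \<ge> 1"
    and s: "\<bar>pcentre \<theta> a - s\<bar> < (1/3) ^ N"
  shows "real (fmult N \<theta> s) \<le> 9 * K"
proof -
  have "\<not> ball (pcentre \<theta> a) (3 * (1/3) ^ N) \<subseteq> exceptional \<theta> N K"
    using light digits_length[OF a] unfolding heavy_def by simp
  then obtain u where "u \<in> ball (pcentre \<theta> a) (3 * (1/3) ^ N)" and u: "u \<notin> exceptional \<theta> N K"
    by blast
  then have "\<bar>pcentre \<theta> a - u\<bar> < 3 * (1/3) ^ N"
    by (simp add: dist_real_def)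
  then have "{b\<in>digits N. \<bar>pcentre \<theta> b - s\<bar> < (1/3) ^ N} \<subseteq> {b\<in>digits N. \<bar>pcentre \<theta> b - u\<bar> < 5 * (1/3) ^ N}"
    using s by auto
  then have "real (fmult N \<theta> s) \<le> real (card {b\<in>digits N. \<bar>pcentre \<theta> b - u\<bar> < 5 * (1/3) ^ N})"
    unfolding fmult_eq by (intro of_nat_mono card_mono) simp_all
  also have "\<dots> \<le> 3 ^ 2 * K"
    by (rule card_near_unexceptional[OF u order_refl K]) simp
  finally show ?thesis
    by simp
qed

lemma light_local_energy:
  assumes a: "a \<in> digits N" and light: "\<not> heavy \<theta> N K a" and K: "K \<ge> 1"
  shows "local_energy \<theta> a \<le> ennreal (18 * K * (1/3) ^ N)"
proof -
  have "local_energy \<theta> a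
      \<le> (\<integral>\<^sup>+ s. ennreal (9 * K) * indicator (ball (pcentre \<theta> a) ((1/3) ^ N)) s \<partial>lborel)"
    unfolding local_energy_def digits_length[OF a]
  proof (intro nn_integral_mono)
    fix s
    show "indicator (ball (pcentre \<theta> a) ((1/3) ^ N)) s * (of_nat (fmult N \<theta> s) :: ennreal)
        \<le> ennreal (9 * K) * indicator (ball (pcentre \<theta> a) ((1/3) ^ N)) s"
      using light_fmult_bound[OF a light K, of s]
      by (auto simp: indicator_def dist_real_def ennreal_of_nat_eq_real_of_nat intro: ennreal_leI)
  qed
  also have "\<dots> = ennreal (9 * K) * ennreal (2 * (1/3) ^ N)"
    by (simp add: nn_integral_cmult_indicator emeasure_ball_real)
  also have "\<dots> = ennreal (18 * K * (1/3) ^ N)"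
    using K by (simp flip: ennreal_mult)
  finally show ?thesis .
qed

section \<open>Minimal heavy words\<close>

lemma sum_stopping_prefix:
  assumes "j \<le> N"
  shows "(\<Sum>a\<in>digits N. if take j a \<in> stopping \<theta> N K j then X a else 0)
    = (\<Sum>b\<in>stopping \<theta> N K j. \<Sum>c\<in>digits (N - j). X (b @ c))"
proof -
  have "(\<Sum>a\<in>digits N. if take j a \<in> stopping \<theta> N K j then X a else 0)
      = (\<Sum>b\<in>digits j. if b \<in> stopping \<theta> N K j then (\<Sum>c\<in>digits (N - j). X (b @ c)) else 0)"
    unfolding sum_digits_split[OF assms] by (intro sum.cong) (auto simp: digits_length)
  also have "\<dots> = (\<Sum>b\<in>stopping \<theta> N K j. \<Sum>c\<in>digits (N - j). X (b @ c))"
    by (simp add: sum.inter_filter[symmetric] stopping_def)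
  finally show ?thesis .
qed

lemma stopping_total_length:
  "(\<Sum>j\<in>{1..N}. \<Sum>b\<in>stopping \<theta> N K j. ennreal (2 * (1/3) ^ j))
    = (\<integral>\<^sup>+ t. of_nat (\<Sum>j\<in>{1..N}. card {b\<in>stopping \<theta> N K j. \<bar>pcentre \<theta> b - t\<bar> < (1/3) ^ j}) \<partial>lborel)"
proof -
  let ?I = "\<lambda>j b. indicator (ball (pcentre \<theta> b) ((1/3) ^ j)) :: real \<Rightarrow> ennreal"
  have "(\<Sum>j\<in>{1..N}. \<Sum>b\<in>stopping \<theta> N K j. ennreal (2 * (1/3) ^ j))
      = (\<Sum>j\<in>{1..N}. \<Sum>b\<in>stopping \<theta> N K j. \<integral>\<^sup>+ t. ?I j b t \<partial>lborel)"
    by (simp add: emeasure_ball_real)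
  also have "\<dots> = (\<Sum>j\<in>{1..N}. \<integral>\<^sup>+ t. (\<Sum>b\<in>stopping \<theta> N K j. ?I j b t) \<partial>lborel)"
    by (intro sum.cong refl nn_integral_sum[symmetric]) simp_all
  also have "\<dots> = (\<integral>\<^sup>+ t. (\<Sum>j\<in>{1..N}. \<Sum>b\<in>stopping \<theta> N K j. ?I j b t) \<partial>lborel)"
    by (intro nn_integral_sum[symmetric]) simp_all
  also have "\<dots> = (\<integral>\<^sup>+ t. of_nat (\<Sum>j\<in>{1..N}.
      card {b\<in>stopping \<theta> N K j. \<bar>pcentre \<theta> b - t\<bar> < (1/3) ^ j}) \<partial>lborel)"
    by (simp add: of_nat_sum card_near_sum_indicator)
  finally show ?thesis .
qed

context
  fixes \<theta> K :: real and N :: nat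
  assumes K_ge_1: "K \<ge> 1"
    and small_exceptional: "emeasure lborel (exceptional \<theta> N K) \<le> ennreal (1 / K ^ 3)"
begin

text \<open>The exceptional set is too small to contain an interval of length 6.\<close>
lemma root_not_heavy: "\<not> heavy \<theta> N K []"
proof
  assume "heavy \<theta> N K []"
  then have "emeasure lborel (ball (0::real) 3) \<le> emeasure lborel (exceptional \<theta> N K)"
    by (intro emeasure_mono) (simp_all add: heavy_def exceptional_measurable)
  also have "\<dots> \<le> ennreal (1 / K ^ 3)"
    by (rule small_exceptional)
  also have "\<dots> \<le> ennreal 1"
    using K_ge_1 by (intro ennreal_leI) (simp add: one_le_power)
  finally show False
    by (simp add: emeasure_ball_real)
qed

text \<open>A minimal heavy word has a non-exceptional point near its centre, inherited from its
  non-heavy parent.\<close>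
lemma stopping_witness:
  assumes b: "b \<in> stopping \<theta> N K j"
  obtains u where "u \<notin> exceptional \<theta> N K" "\<bar>pcentre \<theta> b - u\<bar> < 10 * (1/3) ^ j"
proof -
  have bd: "b \<in> digits j" and nb: "\<not> heavy \<theta> N K (take (j - 1) b)"
    using b by (auto simp: stopping_def)
  have j: "j \<noteq> 0"
    using b root_not_heavy digits_length[OF bd] by (auto simp: stopping_def)
  have lb: "length b = j"
    using digits_length[OF bd] .
  have parent: "(1/3::real) ^ (j - 1) = 3 * (1/3) ^ j"
    using pow3_sub[of 1 j] j by simp
  have "\<not> ball (pcentre \<theta> (take (j - 1) b)) (9 * (1/3) ^ j) \<subseteq> exceptional \<theta> N K"
    using nb lb parent unfolding heavy_def by simp
  then obtain u where "u \<in> ball (pcentre \<theta> (take (j - 1) b)) (9 * (1/3) ^ j)" "u \<notin> exceptional \<theta> N K"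
    by blast
  then have u: "\<bar>pcentre \<theta> (take (j - 1) b) - u\<bar> < 9 * (1/3) ^ j" "u \<notin> exceptional \<theta> N K"
    by (simp_all add: dist_real_def)
  have "\<bar>pcentre \<theta> b - pcentre \<theta> (take (j - 1) b)\<bar> \<le> ((1/3) ^ (j - 1) - (1/3) ^ j) / 2"
    using pcentre_descendant[of \<theta> "take (j - 1) b" "drop (j - 1) b"] lb j by simp
  then have "\<bar>pcentre \<theta> b - pcentre \<theta> (take (j - 1) b)\<bar> \<le> (1/3) ^ j"
    unfolding parent by simp
  with u have "\<bar>pcentre \<theta> b - u\<bar> < 9 * (1/3) ^ j + (1/3) ^ j"
    by (intro abs_diff_lt_shift) (auto simp: abs_minus_commute)
  then show ?thesis
    using that u(2) by simp
qed

lemma stopping_near: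
  assumes b: "b \<in> stopping \<theta> N K j" and jN: "j \<le> N"
  shows "real (card {b'\<in>digits j. \<bar>pcentre \<theta> b' - pcentre \<theta> b\<bar> < 2 * (1/3) ^ j}) \<le> 27 * K"
proof -
  obtain u where u: "u \<notin> exceptional \<theta> N K" "\<bar>pcentre \<theta> b - u\<bar> < 10 * (1/3) ^ j"
    using stopping_witness[OF b] .
  have "card {b'\<in>digits j. \<bar>pcentre \<theta> b' - pcentre \<theta> b\<bar> < 2 * (1/3) ^ j}
      \<le> card {b'\<in>digits j. \<bar>pcentre \<theta> b' - u\<bar> < 12 * (1/3) ^ j}"
    using u(2) by (intro card_mono) auto
  then have "real (card {b'\<in>digits j. \<bar>pcentre \<theta> b' - pcentre \<theta> b\<bar> < 2 * (1/3) ^ j})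
      \<le> real (card {b'\<in>digits j. \<bar>pcentre \<theta> b' - u\<bar> < 12 * (1/3) ^ j})"
    by (rule of_nat_mono)
  also have "\<dots> \<le> 3 ^ 3 * K"
    by (rule card_near_unexceptional[OF u(1) jN K_ge_1]) simp
  finally show ?thesis
    by simp
qed

lemma stopping_level_overlap:
  assumes jN: "j \<le> N"
  shows "real (card {b\<in>stopping \<theta> N K j. \<bar>pcentre \<theta> b - t\<bar> < (1/3) ^ j}) \<le> 27 * K"
proof (cases "{b\<in>stopping \<theta> N K j. \<bar>pcentre \<theta> b - t\<bar> < (1/3) ^ j} = {}")
  case True
  show ?thesis
    unfolding True using K_ge_1 by simp
next
  case False
  then obtain b0 where b0: "b0 \<in> stopping \<theta> N K j" "\<bar>pcentre \<theta> b0 - t\<bar> < (1/3) ^ j"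
    by auto
  have "{b\<in>stopping \<theta> N K j. \<bar>pcentre \<theta> b - t\<bar> < (1/3) ^ j}
      \<subseteq> {b'\<in>digits j. \<bar>pcentre \<theta> b' - pcentre \<theta> b0\<bar> < 2 * (1/3) ^ j}"
    using b0(2) by (auto simp: stopping_def)
  then have "card {b\<in>stopping \<theta> N K j. \<bar>pcentre \<theta> b - t\<bar> < (1/3) ^ j}
      \<le> card {b'\<in>digits j. \<bar>pcentre \<theta> b' - pcentre \<theta> b0\<bar> < 2 * (1/3) ^ j}"
    by (intro card_mono) simp_all
  then have "real (card {b\<in>stopping \<theta> N K j. \<bar>pcentre \<theta> b - t\<bar> < (1/3) ^ j})
      \<le> real (card {b'\<in>digits j. \<bar>pcentre \<theta> b' - pcentre \<theta> b0\<bar> < 2 * (1/3) ^ j})"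
    by (rule of_nat_mono)
  also have "\<dots> \<le> 27 * K"
    by (rule stopping_near[OF b0(1) jN])
  finally show ?thesis .
qed

text \<open>A point lies in intervals of minimal heavy words of at most two consecutive levels:
  the non-exceptional witness of a much deeper word would lie in the heavy interval of a
  shallower one.\<close>
lemma stopping_level_gap:
  assumes b1: "b1 \<in> stopping \<theta> N K j1" "\<bar>pcentre \<theta> b1 - t\<bar> < (1/3) ^ j1"
    and b2: "b2 \<in> stopping \<theta> N K j2" "\<bar>pcentre \<theta> b2 - t\<bar> < (1/3) ^ j2"
  shows "j2 < j1 + 2"
proof (rule ccontr)
  assume "\<not> j2 < j1 + 2"
  then have "(1/3::real) ^ j2 \<le> (1/3) ^ (j1 + 2)"
    by (intro power_decreasing) auto
  then have "9 * (1/3::real) ^ j2 \<le> (1/3) ^ j1"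
    by (simp add: power_add)
  then have small: "11 * (1/3::real) ^ j2 \<le> 2 * (1/3) ^ j1"
    using zero_le_power[of "1/3::real" j2] by linarith
  obtain u where u: "u \<notin> exceptional \<theta> N K" "\<bar>pcentre \<theta> b2 - u\<bar> < 10 * (1/3) ^ j2"
    using stopping_witness[OF b2(1)] .
  have "\<bar>pcentre \<theta> b1 - u\<bar> < (1/3) ^ j1 + ((1/3) ^ j2 + 10 * (1/3) ^ j2)"
    using b1(2) b2(2) u(2) by (simp add: abs_diff_lt_shift abs_minus_commute)
  then have "\<bar>pcentre \<theta> b1 - u\<bar> < 3 * (1/3) ^ j1"
    using small by linarith
  then show False
    using stopping_ball_exceptional[OF b1(1)] u(1) by blast
qed

lemma stopping_levels_card:
  "card {j\<in>{1..N}. \<exists>b\<in>stopping \<theta> N K j. \<bar>pcentre \<theta> b - t\<bar> < (1/3) ^ j} \<le> 2"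
  (is "card ?L \<le> 2")
proof (cases "?L = {}")
  case False
  define a where "a = Min ?L"
  have finL: "finite ?L"
    by simp
  have aL: "a \<in> ?L"
    unfolding a_def using finL False by (rule Min_in)
  have "?L \<subseteq> {a, a + 1}"
  proof
    fix j assume j: "j \<in> ?L"
    have "a \<le> j"
      using finL j by (simp add: a_def)
    moreover have "j < a + 2"
      using aL j stopping_level_gap by blast
    ultimately show "j \<in> {a, a + 1}"
      by auto
  qed
  then have "card ?L \<le> card {a, a + 1}"
    by (rule card_mono[rotated]) simp
  then show ?thesis
    by simp
next
  case True
  show ?thesis
    unfolding True by simp
qed

lemma stopping_overlap:
  "real (\<Sum>j\<in>{1..N}. card {b\<in>stopping \<theta> N K j. \<bar>pcentre \<theta> b - t\<bar> < (1/3) ^ j})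
    \<le> 54 * K * indicator (exceptional \<theta> N K) t"
proof -
  define c where "c j = card {b\<in>stopping \<theta> N K j. \<bar>pcentre \<theta> b - t\<bar> < (1/3) ^ j}" for j
  define L where "L = {j\<in>{1..N}. \<exists>b\<in>stopping \<theta> N K j. \<bar>pcentre \<theta> b - t\<bar> < (1/3) ^ j}"
  have "(\<Sum>j\<in>{1..N}. real (c j)) = (\<Sum>j\<in>L. real (c j))"
    by (rule sum.mono_neutral_right) (auto simp: L_def c_def)
  also have "\<dots> \<le> 54 * K * indicator (exceptional \<theta> N K) t"
  proof (cases "t \<in> exceptional \<theta> N K")
    case True
    have "(\<Sum>j\<in>L. real (c j)) \<le> real (card L) * (27 * K)"
      using stopping_level_overlap by (intro sum_bounded_above) (simp add: c_def L_def)
    also have "\<dots> \<le> 2 * (27 * K)"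
      using stopping_levels_card[of t] K_ge_1 by (intro mult_right_mono) (simp_all add: L_def)
    finally show ?thesis
      using True by simp
  next
    case False
    then have "L = {}"
      using stopping_ball_exceptional by (force simp: L_def)
    then show ?thesis
      using K_ge_1 by simp
  qed
  finally show ?thesis
    by (simp add: c_def)
qed

text \<open>Packing: since the intervals of minimal heavy words cover the small exceptional set
  with bounded overlap, their total length is \<open>O(K\<^sup>-\<^sup>2)\<close>.\<close>
lemma stopping_packing:
  "(\<Sum>j\<in>{1..N}. \<Sum>b\<in>stopping \<theta> N K j. ennreal ((1/3) ^ j)) \<le> ennreal (27 / K\<^sup>2)"
proof -
  let ?S = "\<Sum>j\<in>{1..N}. \<Sum>b\<in>stopping \<theta> N K j. ennreal ((1/3) ^ j)"
  let ?count = "\<lambda>t. \<Sum>j\<in>{1..N}. card {b\<in>stopping \<theta> N K j. \<bar>pcentre \<theta> b - t\<bar> < (1/3) ^ j}"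
  have "ennreal (2 * (1/3) ^ j) = ennreal ((1/3) ^ j) + ennreal ((1/3) ^ j)" for j :: nat
    unfolding mult_2 by (rule ennreal_plus) simp_all
  then have "?S + ?S = (\<Sum>j\<in>{1..N}. \<Sum>b\<in>stopping \<theta> N K j. ennreal (2 * (1/3) ^ j))"
    by (simp only: sum.distrib)
  also have "\<dots> = (\<integral>\<^sup>+ t. of_nat (?count t) \<partial>lborel)"
    by (rule stopping_total_length)
  also have "\<dots> \<le> (\<integral>\<^sup>+ t. ennreal (54 * K) * indicator (exceptional \<theta> N K) t \<partial>lborel)"
  proof (rule nn_integral_mono)
    fix t
    have "(of_nat (?count t) :: ennreal) = ennreal (real (?count t))"
      by (rule ennreal_of_nat_eq_real_of_nat)
    also have "\<dots> \<le> ennreal (54 * K * indicator (exceptional \<theta> N K) t)"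
      by (intro ennreal_leI stopping_overlap)
    also have "\<dots> = ennreal (54 * K) * indicator (exceptional \<theta> N K) t"
      by (simp add: indicator_def)
    finally show "(of_nat (?count t) :: ennreal) \<le> ennreal (54 * K) * indicator (exceptional \<theta> N K) t" .
  qed
  also have "\<dots> = ennreal (54 * K) * emeasure lborel (exceptional \<theta> N K)"
    by (simp add: nn_integral_cmult_indicator exceptional_measurable)
  also have "\<dots> \<le> ennreal (54 * K) * ennreal (1 / K ^ 3)"
    by (intro mult_left_mono small_exceptional) simp
  also have "\<dots> = ennreal (27 / K\<^sup>2 + 27 / K\<^sup>2)"
  proof -
    have "54 * K * (1 / K ^ 3) = 27 / K\<^sup>2 + 27 / K\<^sup>2"
      using K_ge_1 by (simp add: power2_eq_square power3_eq_cube field_simps)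
    then show ?thesis
      using K_ge_1 by (simp flip: ennreal_mult)
  qed
  also have "\<dots> = ennreal (27 / K\<^sup>2) + ennreal (27 / K\<^sup>2)"
    by (rule ennreal_plus) simp_all
  finally have "ennreal (1/2) * (?S + ?S) \<le> ennreal (1/2) * (ennreal (27 / K\<^sup>2) + ennreal (27 / K\<^sup>2))"
    by (rule mult_left_mono) simp
  then show ?thesis
    by (simp only: ennreal_half_double)
qed

text \<open>Every heavy word has a minimal heavy prefix, of positive length since the empty word
  is not heavy.\<close>
lemma heavy_stopping_prefix:
  assumes a: "a \<in> digits N" and "heavy \<theta> N K a"
  obtains j where "j \<in> {1..N}" "take j a \<in> stopping \<theta> N K j"
proof -
  have ex: "\<exists>j. heavy \<theta> N K (take j a)"
    using assms by (metis take_all order_refl)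
  define j where "j = (LEAST j. heavy \<theta> N K (take j a))"
  have heavy_j: "heavy \<theta> N K (take j a)"
    unfolding j_def using ex by (rule LeastI_ex)
  have jN: "j \<le> N"
    unfolding j_def using assms digits_length[OF a] by (metis Least_le take_all order_refl)
  have j0: "j \<noteq> 0"
    using heavy_j root_not_heavy by (metis take_0)
  have "\<not> heavy \<theta> N K (take (j - 1) a)"
    using not_less_Least[of "j - 1" "\<lambda>j. heavy \<theta> N K (take j a)"] j0 unfolding j_def by simp
  then have "take j a \<in> stopping \<theta> N K j"
    using heavy_j digits_take[OF a jN] j0 by (simp add: stopping_def)
  then show thesis
    by (rule that[rotated]) (use jN j0 in simp)
qed

lemma heavy_sum_le_stopping:
  fixes X :: "int list \<Rightarrow> ennreal"
  shows "(\<Sum>a\<in>digits N. if heavy \<theta> N K a then X a else 0)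
    \<le> (\<Sum>j\<in>{1..N}. \<Sum>b\<in>stopping \<theta> N K j. \<Sum>c\<in>digits (N - j). X (b @ c))"
proof -
  have "(if heavy \<theta> N K a then X a else 0)
      \<le> (\<Sum>j\<in>{1..N}. if take j a \<in> stopping \<theta> N K j then X a else 0)"
    if a: "a \<in> digits N" for a
  proof (cases "heavy \<theta> N K a")
    case True
    then obtain j where j: "j \<in> {1..N}" "take j a \<in> stopping \<theta> N K j"
      using heavy_stopping_prefix[OF a] by blast
    then have "(if heavy \<theta> N K a then X a else 0) = (if take j a \<in> stopping \<theta> N K j then X a else 0)"
      using True by simp
    also have "\<dots> \<le> (\<Sum>j\<in>{1..N}. if take j a \<in> stopping \<theta> N K j then X a else 0)"
      by (rule member_le_sum) (use j in simp_all)
    finally show ?thesis .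
  qed simp
  then have "(\<Sum>a\<in>digits N. if heavy \<theta> N K a then X a else 0)
      \<le> (\<Sum>a\<in>digits N. \<Sum>j\<in>{1..N}. if take j a \<in> stopping \<theta> N K j then X a else 0)"
    by (rule sum_mono)
  also have "\<dots> = (\<Sum>j\<in>{1..N}. \<Sum>b\<in>stopping \<theta> N K j. \<Sum>c\<in>digits (N - j). X (b @ c))"
    by (subst sum.swap) (simp add: sum_stopping_prefix)
  finally show ?thesis .
qed

lemma stopping_descendants_energy:
  assumes b: "b \<in> stopping \<theta> N K j" and j: "j \<in> {1..N}"
    and IH: "energy \<theta> (N - j) \<le> ennreal (19 * K)"
  shows "(\<Sum>c\<in>digits (N - j). local_energy \<theta> (b @ c)) \<le> ennreal (513 * K\<^sup>2) * ennreal ((1/3) ^ j)"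
proof -
  have bd: "b \<in> digits j" and jN: "j \<le> N"
    using b j by (auto simp: stopping_def)
  have near: "(of_nat (card {b'\<in>digits j. \<bar>pcentre \<theta> b' - pcentre \<theta> b\<bar> < 2 * (1/3) ^ j}) :: ennreal)
      \<le> ennreal (27 * K)"
    using stopping_near[OF b jN]
    by (simp add: ennreal_of_nat_eq_real_of_nat ennreal_leI)
  have "(\<Sum>c\<in>digits (N - j). local_energy \<theta> (b @ c))
      \<le> of_nat (card {b'\<in>digits j. \<bar>pcentre \<theta> b' - pcentre \<theta> b\<bar> < 2 * (1/3) ^ j})
        * (ennreal ((1/3) ^ j) * energy \<theta> (N - j))"
    by (rule descendants_local_energy[OF bd jN])
  also have "\<dots> \<le> ennreal (27 * K) * (ennreal ((1/3) ^ j) * ennreal (19 * K))"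
    using near IH by (intro mult_mono mult_left_mono) simp_all
  also have "\<dots> = ennreal (513 * K\<^sup>2) * ennreal ((1/3) ^ j)"
    using K_ge_1 by (simp add: power2_eq_square mult_ac flip: ennreal_mult)
  finally show ?thesis .
qed

text \<open>The induction step: light words contribute \<open>18 K\<close> in total, heavy words are grouped
  under minimal heavy prefixes, whose total weight is \<open>O(K\<^sup>-\<^sup>2)\<close> by packing.\<close>
lemma energy_step:
  assumes K: "K \<ge> 13851" and IH: "\<And>n. n < N \<Longrightarrow> energy \<theta> n \<le> ennreal (19 * K)"
  shows "energy \<theta> N \<le> ennreal (19 * K)"
proof -
  let ?H = "\<lambda>a. if heavy \<theta> N K a then local_energy \<theta> a else 0"
  have split: "local_energy \<theta> a \<le> ennreal (18 * K * (1/3) ^ N) + ?H a" if "a \<in> digits N" for a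
    using light_local_energy[OF that _ K_ge_1] by (cases "heavy \<theta> N K a") simp_all
  have "(\<Sum>a\<in>digits N. ?H a)
      \<le> (\<Sum>j\<in>{1..N}. \<Sum>b\<in>stopping \<theta> N K j. \<Sum>c\<in>digits (N - j). local_energy \<theta> (b @ c))"
    by (rule heavy_sum_le_stopping)
  also have "\<dots> \<le> (\<Sum>j\<in>{1..N}. \<Sum>b\<in>stopping \<theta> N K j. ennreal (513 * K\<^sup>2) * ennreal ((1/3) ^ j))"
    using IH stopping_descendants_energy by (intro sum_mono) simp
  also have "\<dots> = ennreal (513 * K\<^sup>2) * (\<Sum>j\<in>{1..N}. \<Sum>b\<in>stopping \<theta> N K j. ennreal ((1/3) ^ j))"
    by (simp only: sum_distrib_left)
  also have "\<dots> \<le> ennreal (513 * K\<^sup>2) * ennreal (27 / K\<^sup>2)"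
    by (intro mult_left_mono stopping_packing) simp
  also have "\<dots> = ennreal 13851"
    using K_ge_1 by (simp flip: ennreal_mult)
  finally have heavy_part: "(\<Sum>a\<in>digits N. ?H a) \<le> ennreal 13851" .
  have "energy \<theta> N \<le> (\<Sum>a\<in>digits N. ennreal (18 * K * (1/3) ^ N) + ?H a)"
    unfolding energy_decomp using split by (rule sum_mono)
  also have "\<dots> = ennreal (18 * K) + (\<Sum>a\<in>digits N. ?H a)"
    using K_ge_1 by (simp add: sum.distrib card_digits ennreal_of_nat_eq_real_of_nat power_one_over
        flip: ennreal_mult)
  also have "\<dots> \<le> ennreal (18 * K + 13851)"
    using heavy_part K_ge_1 by (simp add: add_left_mono)
  also have "\<dots> \<le> ennreal (19 * K)"
    using K by (intro ennreal_leI) simp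
  finally show ?thesis .
qed

end

text \<open>By strong induction on \<open>N\<close>, using that the hypothesis is inherited by smaller \<open>N\<close>.\<close>
lemma energy_bound:
  assumes K: "K \<ge> 13851"
  shows "emeasure lborel (exceptional \<theta> N K) \<le> ennreal (1 / K ^ 3) \<Longrightarrow> energy \<theta> N \<le> ennreal (19 * K)"
proof (induction N rule: less_induct)
  case (less N)
  show ?case
  proof (rule energy_step[OF _ less.prems K])
    fix n assume "n < N"
    have "emeasure lborel (exceptional \<theta> n K) \<le> emeasure lborel (exceptional \<theta> N K)"
      using \<open>n < N\<close> by (intro emeasure_mono exceptional_mono) (simp_all add: exceptional_measurable)
    then show "energy \<theta> n \<le> ennreal (19 * K)"
      using less.IH[OF \<open>n < N\<close>] less.prems by (meson order_trans)
  qed (use K in simp)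
qed

theorem theorem4:
  shows "\<exists>C K0 :: real. \<forall>(N::nat) (\<theta>::real) (K::real).
    0 \<le> \<theta> \<and> \<theta> < pi \<and> K \<ge> K0 \<and>
    emeasure lborel {s. real (fstar N \<theta> s) \<ge> K} \<le> ennreal (1 / K ^ 3) \<longrightarrow>
    (\<forall>n\<le>N. (\<integral>\<^sup>+ s. ennreal ((real (fmult n \<theta> s))\<^sup>2) \<partial>lborel) \<le> ennreal (C * K))"
proof (rule exI[of _ 19], rule exI[of _ 13851], (rule allI)+, rule impI)
  fix N :: nat and \<theta> K :: real
  assume hyp: "0 \<le> \<theta> \<and> \<theta> < pi \<and> K \<ge> 13851 \<and>
    emeasure lborel {s. real (fstar N \<theta> s) \<ge> K} \<le> ennreal (1 / K ^ 3)"
  show "\<forall>n\<le>N. (\<integral>\<^sup>+ s. ennreal ((real (fmult n \<theta> s))\<^sup>2) \<partial>lborel) \<le> ennreal (19 * K)"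
  proof (intro allI impI)
    fix n assume n: "n \<le> N"
    have "emeasure lborel (exceptional \<theta> n K) \<le> emeasure lborel (exceptional \<theta> N K)"
      using n by (intro emeasure_mono exceptional_mono) (simp_all add: exceptional_measurable)
    also have "\<dots> \<le> ennreal (1 / K ^ 3)"
      using hyp by (simp add: exceptional_def)
    finally have "energy \<theta> n \<le> ennreal (19 * K)"
      using hyp by (intro energy_bound) simp_all
    moreover have "(\<integral>\<^sup>+ s. ennreal ((real (fmult n \<theta> s))\<^sup>2) \<partial>lborel) = energy \<theta> n"
      unfolding energy_def by (simp add: ennreal_of_nat_eq_real_of_nat ennreal_power)
    ultimately show "(\<integral>\<^sup>+ s. ennreal ((real (fmult n \<theta> s))\<^sup>2) \<partial>lborel) \<le> ennreal (19 * K)"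
      by simp
  qed
qed

end
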